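(* There is an absolute constant $C>0$ such that the following holds. Let $n\ge 1$ and let $T:\mathbb{C}\times S^1\to\mathbb{C}$ satisfy $\mathrm{Lip}(T_\theta-\mathrm{Id})<4^{-n}$ for every $\theta$. Let $P=(Q,Q')\in A_{j,k,T}$ for some integers $j,k$. Then $\rho_{P,T}:=\int_0^{2\pi}|\mathrm{Proj}_\theta(T_\theta(Q))\cap\mathrm{Proj}_\theta(T_\theta(Q'))|\,d\theta\le C\,4^{k-2n}$.
   Context: Middle-half Cantor set: $\mathcal{C}_0=[0,1]$ and $\mathcal{C}_{n+1}$ is obtained from $\mathcal{C}_n$ by replacing each of its intervals by the first and last quarters of that interval; $\mathcal{K}_n:=\mathcal{C}_n\times\mathcal{C}_n$ is the union of $4^n$ squares ("Cantor squares") of side $4^{-n}$. $T_\theta(z):=T(z,e^{i\theta})$; $\mathrm{Proj}_\theta$ is orthogonal projection onto the line through the origin in direction $e^{i\theta}$ and $|\cdot|$ is one-dimensional Lebesgue measure. In the rotated coordinates $(x,y)$ whose positive $x$-axis makes angle $\arctan(1/2)$ with the standard $x$-axis, $A_{j,k,T}$ is the set of pairs $(Q,Q')$ of Cantor squares such that for some $\theta$ the images $T_\theta(q)=(x_1,y_1)$, $T_\theta(q')=(x_2,y_2)$ of their centers satisfy $4^{-k-1}\le|y_1-y_2|\le 4^{-k}$ and $4^{-j-1}\le\left|\frac{x_1-x_2}{y_1-y_2}\right|\le 4^{-j}$. *)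

theory Defs
  imports "HOL-Analysis.Analysis"
begin

text \<open>Left endpoints of the intervals of the n-th stage C_n of the middle-half Cantor set.
  Each interval [a, a + 4^-n] of C_n is replaced by [a, a + 4^-(n+1)] and
  [a + 3 * 4^-(n+1), a + 4^-n].\<close>
fun cantor_lefts :: "nat \<Rightarrow> real set" where
  "cantor_lefts 0 = {0}"
| "cantor_lefts (Suc n) = cantor_lefts n \<union> (\<lambda>a. a + 3 / 4 ^ Suc n) ` cantor_lefts n"

definition cantor_square :: "nat \<Rightarrow> real \<Rightarrow> real \<Rightarrow> complex set" where
  "cantor_square n a b = cbox (Complex a b) (Complex (a + 1 / 4 ^ n) (b + 1 / 4 ^ n))"

definition square_center :: "nat \<Rightarrow> real \<Rightarrow> real \<Rightarrow> complex" where
  "square_center n a b = Complex (a + 1 / (2 * 4 ^ n)) (b + 1 / (2 * 4 ^ n))"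

definition Tth :: "(complex \<Rightarrow> complex \<Rightarrow> complex) \<Rightarrow> real \<Rightarrow> complex \<Rightarrow> complex" where
  "Tth T \<theta> z = T z (cis \<theta>)"

text \<open>Orthogonal projection onto the line through 0 in direction e^{i theta}, with the line
  identified isometrically with the real line via its coordinate along e^{i theta}.\<close>
definition Proj :: "real \<Rightarrow> complex \<Rightarrow> real" where
  "Proj \<theta> z = z \<bullet> cis \<theta>"

definition rot_x :: "complex \<Rightarrow> real" where
  "rot_x p = Re (p * cis (- arctan (1/2)))"

definition rot_y :: "complex \<Rightarrow> real" where
  "rot_y p = Im (p * cis (- arctan (1/2)))"

definition A_set :: "nat \<Rightarrow> int \<Rightarrow> int \<Rightarrow> (complex \<Rightarrow> complex \<Rightarrow> complex)
    \<Rightarrow> (complex set \<times> complex set) set" where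
  "A_set n j k T = {(cantor_square n a b, cantor_square n a' b') | a b a' b'.
     a \<in> cantor_lefts n \<and> b \<in> cantor_lefts n \<and> a' \<in> cantor_lefts n \<and> b' \<in> cantor_lefts n \<and>
     (\<exists>\<theta>. let p1 = Tth T \<theta> (square_center n a b); p2 = Tth T \<theta> (square_center n a' b');
              x1 = rot_x p1; y1 = rot_y p1; x2 = rot_x p2; y2 = rot_y p2 in
          4 powr (- real_of_int k - 1) \<le> \<bar>y1 - y2\<bar> \<and> \<bar>y1 - y2\<bar> \<le> 4 powr (- real_of_int k) \<and>
          4 powr (- real_of_int j - 1) \<le> \<bar>(x1 - x2) / (y1 - y2)\<bar> \<and>
          \<bar>(x1 - x2) / (y1 - y2)\<bar> \<le> 4 powr (- real_of_int j))}"

definition rho :: "complex set \<times> complex set \<Rightarrow> (complex \<Rightarrow> complex \<Rightarrow> complex) \<Rightarrow> ennreal" where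
  "rho P T = (\<integral>\<^sup>+ \<theta> \<in> {0..2*pi}.
      emeasure lborel ((Proj \<theta> \<circ> Tth T \<theta>) ` fst P \<inter> (Proj \<theta> \<circ> Tth T \<theta>) ` snd P) \<partial>lborel)"

end

theory Submission
  imports Defs
begin

text \<open>Since \<open>T\<^sub>\<theta>\<close> is a small Lipschitz perturbation of the identity, the projection of
  \<open>T\<^sub>\<theta>(Q)\<close> lies within \<open>2\<cdot>4\<^sup>-\<^sup>n\<close> of the projection of \<open>T\<^sub>\<theta>(q)\<close>, \<open>q\<close> the center of \<open>Q\<close>.
  Hence the two projections overlap in a set of measure at most \<open>4\<cdot>4\<^sup>-\<^sup>n\<close>, and they
  overlap at all only if \<open>|(q - q')\<cdot>e\<^sup>i\<^sup>\<theta>| \<lesssim> 4\<^sup>-\<^sup>n\<close>, i.e. only for \<open>\<theta>\<close> in a set of measure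
  \<open>\<lesssim> 4\<^sup>-\<^sup>n/|q - q'|\<close>. Membership in \<open>A\<^sub>j\<^sub>,\<^sub>k\<^sub>,\<^sub>T\<close> gives \<open>|T\<^sub>\<theta>(q) - T\<^sub>\<theta>(q')| \<ge> 4\<^sup>-\<^sup>k\<^sup>-\<^sup>1\<close> for
  some \<open>\<theta>\<close>, and thus \<open>|q - q'| \<gtrsim> 4\<^sup>-\<^sup>k\<close>.\<close>

lemma abs_le_3_abs_sin:
  fixes y :: real
  assumes "\<bar>y\<bar> \<le> pi / 2"
  shows "\<bar>y\<bar> \<le> 3 * \<bar>sin y\<bar>"
proof -
  have "\<bar>sin y - (\<Sum>m<3. sin_coeff m * y ^ m)\<bar> \<le> inverse (fact 3) * \<bar>y\<bar> ^ 3"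
    by (rule Maclaurin_sin_bound)
  moreover have "(\<Sum>m<3. sin_coeff m * y ^ m) = y"
    by (simp add: sin_coeff_def numeral_3_eq_3 lessThan_Suc)
  ultimately have taylor: "\<bar>sin y - y\<bar> \<le> \<bar>y\<bar> ^ 3 / 6"
    by (simp add: fact_numeral)
  have "\<bar>y\<bar> \<le> 2"
    using assms pi_less_4 by linarith
  then have "\<bar>y\<bar> ^ 2 * \<bar>y\<bar> \<le> 4 * \<bar>y\<bar>"
    using power_mono[of "\<bar>y\<bar>" 2 2] by (intro mult_right_mono) auto
  then have "\<bar>y\<bar> ^ 3 \<le> 4 * \<bar>y\<bar>"
    by (simp add: power3_eq_cube power2_eq_square)
  with taylor show ?thesis
    by linarith
qed

lemma small_abs_cos_near_zero:
  fixes \<theta> \<phi> s :: real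
  assumes "\<theta> \<in> {0..2*pi}" "\<bar>cos (\<theta> - \<phi>)\<bar> \<le> s"
  obtains m :: int where "\<lfloor>-\<phi>/pi\<rfloor> \<le> m" "m \<le> \<lfloor>-\<phi>/pi\<rfloor> + 2"
    "\<bar>\<theta> - (\<phi> + pi/2 + of_int m * pi)\<bar> \<le> 3 * s"
proof -
  define x where "x = \<theta> - \<phi> - pi/2"
  define m where "m = \<lfloor>x/pi + 1/2\<rfloor>"
  define y where "y = x - of_int m * pi"
  have m: "of_int m \<le> x/pi + 1/2" "x/pi + 1/2 < of_int m + 1"
    unfolding m_def by linarith+
  have "of_int m * pi \<le> x + pi/2"
    using m(1) pi_gt_zero by (simp add: field_simps)
  moreover have "x + pi/2 < of_int m * pi + pi"
    using m(2) pi_gt_zero by (simp add: field_simps)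
  ultimately have y_bound: "\<bar>y\<bar> \<le> pi/2"
    unfolding y_def by linarith
  have "cos (\<theta> - \<phi>) = cos (y + of_int m * pi + pi/2)"
    unfolding y_def x_def by simp
  also have "\<dots> = - sin (y + of_int m * pi)"
    by (simp add: cos_add)
  also have "\<dots> = - (sin y * cos (pi * of_int m))"
    by (simp add: sin_add mult.commute)
  finally have "\<bar>cos (\<theta> - \<phi>)\<bar> = \<bar>sin y\<bar>"
    by (simp add: abs_mult)
  with abs_le_3_abs_sin[OF y_bound] assms(2) have "\<bar>y\<bar> \<le> 3 * s"
    by linarith
  then have close: "\<bar>\<theta> - (\<phi> + pi/2 + of_int m * pi)\<bar> \<le> 3 * s"
    unfolding y_def x_def by (simp add: algebra_simps)
  have "-\<phi>/pi \<le> x/pi + 1/2"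
    using assms(1) pi_gt_zero unfolding x_def by (simp add: field_simps)
  then have lower: "\<lfloor>-\<phi>/pi\<rfloor> \<le> m"
    unfolding m_def by (rule floor_mono)
  have "x/pi + 1/2 \<le> -\<phi>/pi + 2"
    using assms(1) pi_gt_zero unfolding x_def by (simp add: field_simps)
  then have "m \<le> \<lfloor>-\<phi>/pi + 2\<rfloor>"
    unfolding m_def by (rule floor_mono)
  then have upper: "m \<le> \<lfloor>-\<phi>/pi\<rfloor> + 2"
    using floor_add_int[of "-\<phi>/pi" 2] by simp
  from lower upper close show ?thesis
    by (rule that)
qed

lemma emeasure_small_abs_cos_le:
  assumes "0 \<le> s"
  shows "emeasure lborel {\<theta>\<in>{0..2*pi}. \<bar>cos (\<theta> - \<phi>)\<bar> \<le> s} \<le> ennreal (18 * s)"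
proof -
  define I :: "int \<Rightarrow> real set"
    where "I m = {(\<phi> + pi/2 + of_int m * pi - 3 * s) .. (\<phi> + pi/2 + of_int m * pi + 3 * s)}" for m
  define M where "M = {\<lfloor>-\<phi>/pi\<rfloor>..\<lfloor>-\<phi>/pi\<rfloor> + 2}"
  have "{\<theta>\<in>{0..2*pi}. \<bar>cos (\<theta> - \<phi>)\<bar> \<le> s} \<subseteq> (\<Union>m\<in>M. I m)"
  proof
    fix \<theta> assume "\<theta> \<in> {\<theta>\<in>{0..2*pi}. \<bar>cos (\<theta> - \<phi>)\<bar> \<le> s}"
    then have "\<theta> \<in> {0..2*pi}" "\<bar>cos (\<theta> - \<phi>)\<bar> \<le> s"
      by auto
    then obtain m where "m \<in> M" "\<bar>\<theta> - (\<phi> + pi/2 + of_int m * pi)\<bar> \<le> 3 * s"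
      unfolding M_def by (rule small_abs_cos_near_zero) simp
    then show "\<theta> \<in> (\<Union>m\<in>M. I m)"
      unfolding I_def by (auto simp: abs_le_iff intro!: bexI[of _ m])
  qed
  moreover have "(\<Union>m\<in>M. I m) \<in> sets lborel"
    unfolding I_def M_def by (intro sets.finite_UN) auto
  ultimately have "emeasure lborel {\<theta>\<in>{0..2*pi}. \<bar>cos (\<theta> - \<phi>)\<bar> \<le> s}
      \<le> emeasure lborel (\<Union>m\<in>M. I m)"
    by (rule emeasure_mono)
  also have "\<dots> \<le> (\<Sum>m\<in>M. emeasure lborel (I m))"
    unfolding I_def M_def by (rule emeasure_subadditive_finite) auto
  also have "\<dots> = (\<Sum>m\<in>M. ennreal (6 * s))"
    using assms unfolding I_def by (intro sum.cong) auto
  also have "\<dots> = ennreal 3 * ennreal (6 * s)"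
    by (simp add: M_def)
  also have "\<dots> = ennreal (18 * s)"
    using assms by (subst ennreal_mult[symmetric]) auto
  finally show ?thesis .
qed

lemma norm_diff_le_of_lipschitz_minus_id:
  fixes f :: "'a::real_normed_vector \<Rightarrow> 'a"
  assumes "lipschitz_on L UNIV (\<lambda>z. f z - z)"
  shows "norm (f z - f w) \<le> (1 + L) * norm (z - w)"
proof -
  have "norm (f z - f w) \<le> norm (z - w) + norm ((f z - z) - (f w - w))"
    using norm_triangle_ineq[of "z - w" "(f z - z) - (f w - w)"] by simp
  also have "norm ((f z - z) - (f w - w)) \<le> L * norm (z - w)"
    using lipschitz_onD[OF assms] by (simp add: dist_norm)
  finally show ?thesis
    by (simp add: algebra_simps)
qed

lemma Proj_diff_le: "\<bar>Proj \<theta> u - Proj \<theta> v\<bar> \<le> cmod (u - v)"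
  unfolding Proj_def inner_diff_left[symmetric]
  using Cauchy_Schwarz_ineq2[of "u - v" "cis \<theta>"] by simp

lemma rot_y_diff_le: "\<bar>rot_y p - rot_y p'\<bar> \<le> cmod (p - p')"
proof -
  have "rot_y p - rot_y p' = Im ((p - p') * cis (- arctan (1/2)))"
    unfolding rot_y_def by (simp add: left_diff_distrib)
  also have "\<bar>\<dots>\<bar> \<le> cmod ((p - p') * cis (- arctan (1/2)))"
    by (rule abs_Im_le_cmod)
  also have "\<dots> = cmod (p - p')"
    by (simp add: norm_mult)
  finally show ?thesis .
qed

lemma Proj_image_near_center:
  assumes lip: "lipschitz_on h UNIV (\<lambda>z. f z - z)" and "h \<le> 1"
    and near: "Q \<subseteq> cball q h"
  shows "(Proj \<theta> \<circ> f) ` Q \<subseteq> {Proj \<theta> (f q) - 2*h .. Proj \<theta> (f q) + 2*h}"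
proof clarify
  fix z assume "z \<in> Q"
  have "\<bar>Proj \<theta> (f z) - Proj \<theta> (f q)\<bar> \<le> cmod (f z - f q)"
    by (rule Proj_diff_le)
  also have "\<dots> \<le> (1 + h) * cmod (z - q)"
    by (rule norm_diff_le_of_lipschitz_minus_id[OF lip])
  also have "\<dots> \<le> 2 * h"
    using near \<open>z \<in> Q\<close> \<open>h \<le> 1\<close> mult_mono[of "1 + h" 2 "cmod (z - q)" h]
    by (auto simp: dist_norm norm_minus_commute)
  finally show "(Proj \<theta> \<circ> f) z \<in> {Proj \<theta> (f q) - 2*h .. Proj \<theta> (f q) + 2*h}"
    by (simp add: abs_le_iff)
qed

lemma Proj_overlap_near_orthogonal:
  assumes lip: "lipschitz_on h UNIV (\<lambda>z. f z - z)" and "h \<le> 1"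
    and near: "Q \<subseteq> cball q h" "Q' \<subseteq> cball q' h"
    and overlap: "(Proj \<theta> \<circ> f) ` Q \<inter> (Proj \<theta> \<circ> f) ` Q' \<noteq> {}"
  shows "\<bar>(q - q') \<bullet> cis \<theta>\<bar> \<le> 4*h + h * cmod (q - q')"
proof -
  obtain r where "r \<in> (Proj \<theta> \<circ> f) ` Q" "r \<in> (Proj \<theta> \<circ> f) ` Q'"
    using overlap by blast
  then have "\<bar>r - Proj \<theta> (f q)\<bar> \<le> 2*h" "\<bar>r - Proj \<theta> (f q')\<bar> \<le> 2*h"
    using Proj_image_near_center[OF lip \<open>h \<le> 1\<close> near(1), where \<theta> = \<theta>]
      Proj_image_near_center[OF lip \<open>h \<le> 1\<close> near(2), where \<theta> = \<theta>]
    by (auto simp: abs_le_iff subset_iff)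
  then have "\<bar>Proj \<theta> (f q) - Proj \<theta> (f q')\<bar> \<le> 4*h"
    by linarith
  moreover have "Proj \<theta> (f q) - Proj \<theta> (f q')
      = (q - q') \<bullet> cis \<theta> + ((f q - q) - (f q' - q')) \<bullet> cis \<theta>"
    unfolding Proj_def by (simp add: inner_diff_left inner_add_left)
  moreover have "\<bar>((f q - q) - (f q' - q')) \<bullet> cis \<theta>\<bar> \<le> h * cmod (q - q')"
    using Cauchy_Schwarz_ineq2[of "(f q - q) - (f q' - q')" "cis \<theta>"]
      lipschitz_onD[OF lip, of q q'] by (simp add: dist_norm)
  ultimately show ?thesis
    by linarith
qed

lemma emeasure_Proj_overlap_le:
  assumes lip: "lipschitz_on h UNIV (\<lambda>z. f z - z)" and "0 \<le> h" "h \<le> 1"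
    and near: "Q \<subseteq> cball q h"
  shows "emeasure lborel ((Proj \<theta> \<circ> f) ` Q \<inter> (Proj \<theta> \<circ> f) ` Q') \<le> ennreal (4*h)"
proof -
  have "emeasure lborel ((Proj \<theta> \<circ> f) ` Q \<inter> (Proj \<theta> \<circ> f) ` Q')
      \<le> emeasure lborel {Proj \<theta> (f q) - 2*h .. Proj \<theta> (f q) + 2*h}"
    using Proj_image_near_center[OF lip \<open>h \<le> 1\<close> near, where \<theta> = \<theta>]
    by (intro emeasure_mono) auto
  also have "\<dots> = ennreal (4*h)"
    using \<open>0 \<le> h\<close> by simp
  finally show ?thesis .
qed

lemma nn_integral_Proj_overlap_le:
  fixes F :: "real \<Rightarrow> complex \<Rightarrow> complex"
  assumes lip: "\<And>\<theta>. lipschitz_on h UNIV (\<lambda>z. F \<theta> z - z)" and "0 < h" "h \<le> 1"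
    and near: "Q \<subseteq> cball q h" "Q' \<subseteq> cball q' h"
    and "q \<noteq> q'"
  shows "(\<integral>\<^sup>+ \<theta> \<in> {0..2*pi}. emeasure lborel ((Proj \<theta> \<circ> F \<theta>) ` Q \<inter> (Proj \<theta> \<circ> F \<theta>) ` Q') \<partial>lborel)
    \<le> ennreal (72 * h\<^sup>2 * (4 + cmod (q - q')) / cmod (q - q'))"
proof -
  define d where "d = cmod (q - q')"
  define \<phi> where "\<phi> = Arg (q - q')"
  define s where "s = h * (4 + d) / d"
  define S where "S = {\<theta>\<in>{0..2*pi}. \<bar>cos (\<theta> - \<phi>)\<bar> \<le> s}"
  have "0 < d"
    using \<open>q \<noteq> q'\<close> unfolding d_def by simp
  then have "0 \<le> s"
    using \<open>0 < h\<close> unfolding s_def by simp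
  have "q - q' = complex_of_real d * cis \<phi>"
    using rcis_cmod_Arg[of "q - q'"] by (simp add: d_def \<phi>_def rcis_def)
  then have polar: "(q - q') \<bullet> cis \<theta> = d * cos (\<theta> - \<phi>)" for \<theta>
    by (simp add: inner_complex_def cos_diff algebra_simps)
  have pointwise: "emeasure lborel ((Proj \<theta> \<circ> F \<theta>) ` Q \<inter> (Proj \<theta> \<circ> F \<theta>) ` Q')
      * indicator {0..2*pi} \<theta> \<le> ennreal (4*h) * indicator S \<theta>" for \<theta>
  proof (cases "\<theta> \<in> {0..2*pi} \<and> (Proj \<theta> \<circ> F \<theta>) ` Q \<inter> (Proj \<theta> \<circ> F \<theta>) ` Q' \<noteq> {}")
    case True
    then have "\<bar>d * cos (\<theta> - \<phi>)\<bar> \<le> 4*h + h * d"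
      using Proj_overlap_near_orthogonal[OF lip[of \<theta>] \<open>h \<le> 1\<close> near] by (simp add: polar d_def)
    then have "\<bar>cos (\<theta> - \<phi>)\<bar> \<le> s"
      using \<open>0 < d\<close> by (simp add: s_def abs_mult pos_le_divide_eq algebra_simps)
    then have "\<theta> \<in> S"
      using True unfolding S_def by blast
    then show ?thesis
      using emeasure_Proj_overlap_le[OF lip[of \<theta>] _ \<open>h \<le> 1\<close> near(1)] \<open>0 < h\<close> True
      by simp
  qed auto
  have "(\<integral>\<^sup>+ \<theta> \<in> {0..2*pi}. emeasure lborel ((Proj \<theta> \<circ> F \<theta>) ` Q \<inter> (Proj \<theta> \<circ> F \<theta>) ` Q') \<partial>lborel)
      \<le> (\<integral>\<^sup>+ \<theta>. ennreal (4*h) * indicator S \<theta> \<partial>lborel)"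
    by (intro nn_integral_mono pointwise)
  also have "\<dots> = ennreal (4*h) * emeasure lborel S"
    by (rule nn_integral_cmult_indicator) (simp add: S_def)
  also have "\<dots> \<le> ennreal (4*h) * ennreal (18 * s)"
    unfolding S_def by (intro mult_left_mono emeasure_small_abs_cos_le \<open>0 \<le> s\<close>) auto
  also have "\<dots> = ennreal (72 * h\<^sup>2 * (4 + d) / d)"
    using \<open>0 < h\<close> \<open>0 \<le> s\<close>
    by (simp add: s_def ennreal_mult[symmetric] power2_eq_square mult.assoc)
  finally show ?thesis
    unfolding d_def .
qed

lemma cantor_lefts_bounds: "a \<in> cantor_lefts n \<Longrightarrow> 0 \<le> a \<and> a + 1/4^n \<le> 1"
proof (induction n arbitrary: a)
  case 0
  then show ?case by simp
next
  case (Suc n)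
  from Suc.prems consider "a \<in> cantor_lefts n"
    | x where "x \<in> cantor_lefts n" "a = x + 3/4^Suc n"
    by auto
  then show ?case
  proof cases
    case 1
    then show ?thesis
      using Suc.IH[of a] by (simp add: field_simps)
  next
    case 2
    moreover have "x + 3/4^Suc n + 1/4^Suc n = x + 1/4^n"
      by (simp add: field_simps)
    ultimately show ?thesis
      using Suc.IH[of x] by (simp add: add_nonneg_nonneg)
  qed
qed

lemma cantor_square_subset_cball: "cantor_square n a b \<subseteq> cball (square_center n a b) (1/4^n)"
proof
  fix z assume "z \<in> cantor_square n a b"
  then have "\<bar>Re (square_center n a b - z)\<bar> \<le> 1/4^n / 2" "\<bar>Im (square_center n a b - z)\<bar> \<le> 1/4^n / 2"
    by (auto simp: cantor_square_def square_center_def in_cbox_complex_iff)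
  then show "z \<in> cball (square_center n a b) (1/4^n)"
    using cmod_le[of "square_center n a b - z"] by (simp add: dist_norm)
qed

lemma square_centers_dist_le:
  assumes "a \<in> cantor_lefts n" "b \<in> cantor_lefts n" "a' \<in> cantor_lefts n" "b' \<in> cantor_lefts n"
  shows "cmod (square_center n a b - square_center n a' b') \<le> 2"
proof -
  have "\<bar>a - a'\<bar> \<le> 1" "\<bar>b - b'\<bar> \<le> 1"
    using assms[THEN cantor_lefts_bounds] by (smt (verit) zero_less_divide_1_iff zero_less_power)+
  then show ?thesis
    using cmod_le[of "square_center n a b - square_center n a' b'"]
    by (simp add: square_center_def)
qed

lemma A_set_centers_separated:
  assumes "P \<in> A_set n j k T"
    and lip: "\<And>\<theta>. lipschitz_on h UNIV (\<lambda>z. Tth T \<theta> z - z)" and "h \<le> 1"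
  obtains a b a' b' where "P = (cantor_square n a b, cantor_square n a' b')"
    "a \<in> cantor_lefts n" "b \<in> cantor_lefts n" "a' \<in> cantor_lefts n" "b' \<in> cantor_lefts n"
    "1 \<le> 8 * 4 powr real_of_int k * cmod (square_center n a b - square_center n a' b')"
proof -
  obtain a b a' b' \<theta> where P: "P = (cantor_square n a b, cantor_square n a' b')"
    and lefts: "a \<in> cantor_lefts n" "b \<in> cantor_lefts n" "a' \<in> cantor_lefts n" "b' \<in> cantor_lefts n"
    and sep: "4 powr (- real_of_int k - 1)
      \<le> \<bar>rot_y (Tth T \<theta> (square_center n a b)) - rot_y (Tth T \<theta> (square_center n a' b'))\<bar>"
    using assms(1) unfolding A_set_def Let_def by auto
  define d where "d = cmod (square_center n a b - square_center n a' b')"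
  define K where "K = (4::real) powr real_of_int k"
  have "0 < K"
    by (simp add: K_def)
  have "4 powr (- real_of_int k - 1) = 1 / (4 * K)"
    by (simp add: K_def powr_diff powr_minus divide_simps)
  then have "1 / (4 * K) \<le> (1 + h) * d"
    using sep rot_y_diff_le[of "Tth T \<theta> (square_center n a b)" "Tth T \<theta> (square_center n a' b')"]
      norm_diff_le_of_lipschitz_minus_id[OF lip, of \<theta> "square_center n a b" "square_center n a' b'"]
    unfolding d_def by linarith
  also have "\<dots> \<le> 2 * d"
    using \<open>h \<le> 1\<close> by (simp add: d_def mult_right_mono)
  finally have "1 \<le> 8 * K * d"
    using \<open>0 < K\<close> by (simp add: field_simps)
  with P lefts show ?thesis
    unfolding K_def d_def by (rule that)
qed

lemma overlap_bound_arith: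
  fixes h d K :: real
  assumes "0 < d" "d \<le> 2" "1 \<le> 8 * K * d"
  shows "72 * h\<^sup>2 * (4 + d) / d \<le> 3456 * K * h\<^sup>2"
proof -
  have "72 * h\<^sup>2 * (4 + d) / d \<le> 72 * h\<^sup>2 * 6 / d"
    using assms by (intro divide_right_mono mult_left_mono) auto
  also have "\<dots> = 432 * h\<^sup>2 * (1 / d)"
    by simp
  also have "\<dots> \<le> 432 * h\<^sup>2 * (8 * K)"
    using assms by (intro mult_left_mono) (auto simp: divide_le_eq mult.commute)
  finally show ?thesis
    by (simp add: algebra_simps)
qed

theorem lemma5:
  "\<exists>C>0. \<forall>(n::nat) (T::complex \<Rightarrow> complex \<Rightarrow> complex) (j::int) (k::int) P.
     n \<ge> 1 \<longrightarrow>
     (\<forall>\<theta>. \<exists>L < 1 / 4 ^ n. lipschitz_on L UNIV (\<lambda>z. Tth T \<theta> z - z)) \<longrightarrow>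
     P \<in> A_set n j k T \<longrightarrow>
     rho P T \<le> ennreal (C * 4 powr (real_of_int k - 2 * real n))"
proof (intro exI[of _ 3456] conjI allI impI)
  fix n T j k P
  assume lipT: "\<forall>\<theta>. \<exists>L < 1 / 4 ^ n. lipschitz_on L UNIV (\<lambda>z. Tth T \<theta> z - z)"
    and "P \<in> A_set n j k T"
  define h where "h = (1::real) / 4^n"
  have "0 < h" "h \<le> 1"
    by (simp_all add: h_def)
  have lip: "lipschitz_on h UNIV (\<lambda>z. Tth T \<theta> z - z)" for \<theta>
    using lipT lipschitz_on_le less_imp_le unfolding h_def by metis
  obtain a b a' b' where P: "P = (cantor_square n a b, cantor_square n a' b')"
    and lefts: "a \<in> cantor_lefts n" "b \<in> cantor_lefts n" "a' \<in> cantor_lefts n" "b' \<in> cantor_lefts n"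
    and sep: "1 \<le> 8 * 4 powr real_of_int k * cmod (square_center n a b - square_center n a' b')"
    using \<open>P \<in> A_set n j k T\<close> lip \<open>h \<le> 1\<close> by (rule A_set_centers_separated)
  define d where "d = cmod (square_center n a b - square_center n a' b')"
  define K where "K = (4::real) powr real_of_int k"
  have "0 < K"
    by (simp add: K_def)
  have "1 \<le> 8 * K * d"
    using sep unfolding K_def d_def .
  then have "0 < d"
    using \<open>0 < K\<close> by (auto simp: d_def intro: ccontr)
  have "rho P T \<le> ennreal (72 * h\<^sup>2 * (4 + d) / d)"
    unfolding rho_def P d_def
    using lip \<open>0 < h\<close> \<open>h \<le> 1\<close> cantor_square_subset_cball \<open>0 < d\<close>
    by (intro nn_integral_Proj_overlap_le) (auto simp: h_def d_def)
  also have "\<dots> \<le> ennreal (3456 * K * h\<^sup>2)"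
    using \<open>0 < d\<close> \<open>1 \<le> 8 * K * d\<close> square_centers_dist_le[OF lefts]
    by (intro ennreal_leI overlap_bound_arith) (auto simp: d_def)
  also have "3456 * K * h\<^sup>2 = 3456 * 4 powr (real_of_int k - 2 * real n)"
    using powr_realpow[of 4 "n * 2"]
    by (simp add: K_def h_def powr_diff power_mult[symmetric] divide_simps mult.commute)
  finally show "rho P T \<le> ennreal (3456 * 4 powr (real_of_int k - 2 * real n))" .
qed simp

end
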